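(* Let $K$ be a field and $s\in K$ with $s\ne0$, $s\ne\pm1$, and $s\ne t^2$ for all $t\in K$. Let $a=\begin{pmatrix}1&0\\0&s\end{pmatrix}$, $b=\begin{pmatrix}0&1\\1&0\end{pmatrix}$ and $V=Ka+Kb\subseteq M_2(K)$. Then: (i) $V$ is a maximal Mathieu subspace of $M_2(K)$; (ii) $V$ contains no nonzero nilpotent element (so it is not of the form $F(\lambda_1e_1+\lambda_2e_2)+e_1M_2e_2$ with $e_1,e_2$ nonzero idempotents summing to $I_2$, nor contained in the trace-zero matrices); (iii) if $L\supseteq K$ is a field containing a square root $\sqrt s$ of $s$, then $U=La+Lb\subseteq M_2(L)$ contains the nonzero idempotent $\frac1{1+s}(a+\sqrt s\,b)$ and hence is not a Mathieu subspace of $M_2(L)$.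
   Context: Let $\mathcal A$ be an associative algebra over a field $F$. An $F$-subspace $M\subseteq\mathcal A$ is a Mathieu subspace (MS) of $\mathcal A$ if for all $a,b,c\in\mathcal A$ such that $a^m\in M$ for all $m\ge 1$, there exists $N$ (depending on $a,b,c$) such that $ba^mc\in M$ for all $m\ge N$. A maximal MS of $\mathcal A$ is a proper MS of $\mathcal A$ that is not properly contained in any proper MS of $\mathcal A$. *)

theory Defs
  imports "HOL-Analysis.Analysis"
begin

text \<open>Square matrices over a field, as elements of the type 'a^'n^'n with
  matrix product (**), identity matrix mat 1. Note: (*) on vec is componentwise,
  so matrix powers and scalar multiples are defined explicitly.\<close>

definition msmult :: "'a::field \<Rightarrow> 'a^'n^'n \<Rightarrow> 'a^'n^'n" where
  "msmult c A = (\<chi> i j. c * A$i$j)"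

definition matpow :: "'a::field^'n^'n \<Rightarrow> nat \<Rightarrow> 'a^'n^'n" where
  "matpow A m = (((**) A) ^^ m) (mat 1)"

definition msubspace :: "('a::field^'n^'n) set \<Rightarrow> bool" where
  "msubspace M \<longleftrightarrow> 0 \<in> M \<and> (\<forall>x\<in>M. \<forall>y\<in>M. x + y \<in> M) \<and> (\<forall>c. \<forall>x\<in>M. msmult c x \<in> M)"

definition mathieu_subspace :: "('a::field^'n^'n) set \<Rightarrow> bool" where
  "mathieu_subspace M \<longleftrightarrow> msubspace M \<and>
     (\<forall>a b c. (\<forall>m\<ge>1. matpow a m \<in> M) \<longrightarrow>
        (\<exists>N. \<forall>m\<ge>N. b ** matpow a m ** c \<in> M))"

definition maximal_mathieu_subspace :: "('a::field^'n^'n) set \<Rightarrow> bool" where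
  "maximal_mathieu_subspace M \<longleftrightarrow> mathieu_subspace M \<and> M \<noteq> UNIV \<and>
     (\<forall>M'. mathieu_subspace M' \<and> M' \<noteq> UNIV \<and> M \<subseteq> M' \<longrightarrow> M' = M)"

definition mnilpotent :: "'a::field^'n^'n \<Rightarrow> bool" where
  "mnilpotent A \<longleftrightarrow> (\<exists>m. matpow A m = 0)"

definition midempotent :: "'a::field^'n^'n \<Rightarrow> bool" where
  "midempotent A \<longleftrightarrow> A ** A = A"

definition matA :: "'a::field \<Rightarrow> 'a^2^2" where
  "matA s = (\<chi> i j. if i = 1 \<and> j = 1 then 1 else if i = 2 \<and> j = 2 then s else 0)"

definition matB :: "'a::field^2^2" where
  "matB = (\<chi> i j. if i \<noteq> j then 1 else 0)"

definition span2 :: "'a::field^'n^'n \<Rightarrow> 'a^'n^'n \<Rightarrow> ('a^'n^'n) set" where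
  "span2 a b = {msmult x a + msmult y b | x y. True}"

text \<open>Entrywise image of a matrix under a map (used for a field embedding K \<rightarrow> L).\<close>
definition mmap :: "('a \<Rightarrow> 'b) \<Rightarrow> 'a^'n^'n \<Rightarrow> 'b^'n^'n" where
  "mmap f A = (\<chi> i j. f (A$i$j))"

definition field_hom :: "('a::field \<Rightarrow> 'b::field) \<Rightarrow> bool" where
  "field_hom f \<longleftrightarrow> f 1 = 1 \<and> (\<forall>x y. f (x + y) = f x + f y) \<and> (\<forall>x y. f (x * y) = f x * f y)"

end

theory Submission
  imports Defs
begin

text \<open>
  V consists of the matrices [[x, y], [y, s x]]. If such a matrix and its square both lie
  in V, then (s - 1)(s x^2 - y^2) = 0, so x = y = 0 because s is not a square. Hence
  the only element of V all of whose powers stay in V is 0, which makes V a Mathieu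
  subspace for trivial reasons. Conversely, a Mathieu subspace containing a nonzero
  idempotent e contains every sandwich P e Q and is therefore the whole algebra. Every
  subspace strictly containing V is a hyperplane, and every hyperplane of M_2(K) contains
  a nonzero idempotent (here s \<noteq> -1 is used), so V is maximal. Nilpotents have
  determinant 0, and the determinant x^2 s - y^2 vanishes on V only at 0. Over L the
  quadratic relation becomes solvable and produces the idempotent of (iii).
\<close>

lemma mat2_eq_iff:
  "(A::'a^2^2) = B \<longleftrightarrow> A$1$1 = B$1$1 \<and> A$1$2 = B$1$2 \<and> A$2$1 = B$2$1 \<and> A$2$2 = B$2$2"
  by (auto simp: vec_eq_iff forall_2)

lemma mat2_mult_nth: "((A::'a::field^2^2) ** B)$i$j = A$i$1 * B$1$j + A$i$2 * B$2$j"
  by (simp add: matrix_matrix_mult_def sum_2)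

lemma msmult_nth [simp]: "(msmult c A)$i$j = c * A$i$j"
  by (simp add: msmult_def)

lemma mmap_nth [simp]: "(mmap f A)$i$j = f (A$i$j)"
  by (simp add: mmap_def)

lemma matA_nth [simp]:
  "(matA s)$1$1 = 1" "(matA s)$1$2 = 0" "(matA s)$2$1 = 0" "(matA s)$2$2 = s"
  by (simp_all add: matA_def)

lemma matB_nth [simp]:
  "(matB :: 'a::field^2^2)$1$1 = 0" "(matB :: 'a::field^2^2)$1$2 = 1"
  "(matB :: 'a::field^2^2)$2$1 = 1" "(matB :: 'a::field^2^2)$2$2 = 0"
  by (simp_all add: matB_def)

definition mat2 :: "'a \<Rightarrow> 'a \<Rightarrow> 'a \<Rightarrow> 'a \<Rightarrow> 'a^2^2" where
  "mat2 a b c d = (\<chi> i j. if i = 1 then (if j = 1 then a else b) else (if j = 1 then c else d))"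

lemma mat2_nth [simp]:
  "mat2 a b c d $1$1 = a" "mat2 a b c d $1$2 = b" "mat2 a b c d $2$1 = c" "mat2 a b c d $2$2 = d"
  by (simp_all add: mat2_def)

text \<open>Cayley-Hamilton: e^2 = tr(e) e - det(e) I.\<close>
lemma mat2_idempotent:
  fixes a b c d :: "'a::field"
  assumes "a + d = 1" and "b * c = a * d"
  shows "mat2 a b c d ** mat2 a b c d = mat2 a b c d"
proof -
  have "a*a + b*c = a*(a+d)" "a*b + b*d = b*(a+d)" "c*a + d*c = c*(a+d)" "c*b + d*d = d*(a+d)"
    using assms(2) by (simp_all add: algebra_simps)
  then show ?thesis
    using assms(1) by (simp add: mat2_eq_iff mat2_mult_nth)
qed

lemma matpow_0: "matpow A 0 = mat 1"
  by (simp add: matpow_def)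

lemma matpow_Suc: "matpow A (Suc m) = A ** matpow A m"
  by (simp add: matpow_def)

lemma matpow_1: "matpow A 1 = A"
  by (simp add: matpow_def)

lemma matpow_2: "matpow A 2 = A ** A"
  by (simp add: matpow_def numeral_2_eq_2)

lemma matpow_zero: "m \<ge> 1 \<Longrightarrow> matpow (0::'a::field^'n^'n) m = 0"
  by (cases m) (auto simp: matpow_Suc)

lemma matpow_idempotent: "A ** A = A \<Longrightarrow> m \<ge> 1 \<Longrightarrow> matpow A m = A"
proof (induction m)
  case (Suc m)
  then show ?case
    by (cases m) (auto simp: matpow_Suc matpow_0)
qed simp

lemma det_matpow: "det (matpow (A::'a::field^'n^'n) m) = det A ^ m"
  by (induction m) (auto simp: matpow_Suc det_mul matpow_0)

lemma det_eq_0_if_mnilpotent: "mnilpotent (A::'a::field^'n^'n) \<Longrightarrow> det A = 0"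
  unfolding mnilpotent_def by (metis det_0 det_matpow mat_0 power_eq_0_iff)

definition mat_unit :: "'n \<Rightarrow> 'n \<Rightarrow> 'a::field^'n^'n" where
  "mat_unit k l = (\<chi> i j. if i = k \<and> j = l then 1 else 0)"

lemma mat_unit_mult_nth: "(mat_unit k i ** A)$p$q = (if p = k then A$i$q else 0)"
proof -
  have "(mat_unit k i ** A)$p$q = (\<Sum>r\<in>UNIV. if p = k \<and> r = i then A$r$q else 0)"
    by (simp add: matrix_matrix_mult_def) (intro sum.cong, auto simp: mat_unit_def)
  then show ?thesis
    by (cases "p = k") simp_all
qed

lemma mult_mat_unit_nth: "(A ** mat_unit j l)$p$q = (if q = l then A$p$j else 0)"
proof -
  have "(A ** mat_unit j l)$p$q = (\<Sum>r\<in>UNIV. if r = j \<and> q = l then A$p$r else 0)"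
    by (simp add: matrix_matrix_mult_def) (intro sum.cong, auto simp: mat_unit_def)
  then show ?thesis
    by (cases "q = l") simp_all
qed

lemma mult_mat_unit_mult_nth: "(A ** mat_unit j k ** B)$i$l = A$i$j * B$k$l"
proof -
  have "(A ** mat_unit j k ** B)$i$l = (\<Sum>r\<in>UNIV. (A ** mat_unit j k)$i$r * B$r$l)"
    by (simp add: matrix_matrix_mult_def)
  also have "\<dots> = (\<Sum>r\<in>UNIV. if r = k then A$i$j * B$r$l else 0)"
    by (intro sum.cong) (simp_all add: mult_mat_unit_nth)
  finally show ?thesis
    by simp
qed

lemma mat_unit_sandwich: "mat_unit k i ** A ** mat_unit j l = msmult (A$i$j) (mat_unit k l)"
  unfolding vec_eq_iff mult_mat_unit_nth mat_unit_mult_nth by (auto simp: mat_unit_def)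

lemma mat_unit_expansion: "A = (\<Sum>k\<in>UNIV. \<Sum>l\<in>UNIV. msmult (A$k$l) (mat_unit k l))"
proof -
  have "(\<Sum>l\<in>UNIV. A$k$l * mat_unit k l $i$j) = (if k = i then A$i$j else 0)" for k i j
    by (cases "k = i") (simp_all add: mat_unit_def if_distrib[of "(*) _"] cong: if_cong)
  then show ?thesis
    by (simp add: vec_eq_iff)
qed

lemma msubspace_sum:
  assumes "msubspace M" and "finite S" and "\<And>x. x \<in> S \<Longrightarrow> f x \<in> M"
  shows "sum f S \<in> M"
  using assms(2,3) by (induction S rule: finite_induct) (use assms(1) in \<open>auto simp: msubspace_def\<close>)

lemma msubspace_eq_UNIV_if_mat_units:
  assumes "msubspace M" and "\<And>k l. (mat_unit k l :: 'a::field^'n^'n) \<in> M"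
  shows "M = UNIV"
proof -
  have "msmult c (mat_unit k l) \<in> M" for c k l
    using assms unfolding msubspace_def by simp
  then have "(\<Sum>k\<in>UNIV. \<Sum>l\<in>UNIV. msmult (A$k$l) (mat_unit k l)) \<in> M" for A :: "'a^'n^'n"
    by (intro msubspace_sum[OF assms(1)] finite)
  then have "A \<in> M" for A
    by (rule ssubst[OF mat_unit_expansion[of A]])
  then show ?thesis
    by blast
qed

subsection \<open>Mathieu subspaces and idempotents\<close>

lemma mathieu_subspace_sandwich_idempotent:
  assumes "mathieu_subspace M" and "e \<in> M" and "e ** e = e"
  shows "P ** e ** Q \<in> M"
proof -
  have "\<forall>m\<ge>1. matpow e m \<in> M"
    using assms by (simp add: matpow_idempotent)
  then obtain N where "\<forall>m\<ge>N. P ** matpow e m ** Q \<in> M"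
    using assms(1) unfolding mathieu_subspace_def by blast
  then have "P ** matpow e (max N 1) ** Q \<in> M"
    by simp
  then show ?thesis
    using matpow_idempotent[OF assms(3), of "max N 1"] by simp
qed

lemma mathieu_subspace_eq_UNIV_if_idempotent:
  fixes e :: "'a::field^'n^'n"
  assumes "mathieu_subspace M" and "e \<in> M" and "e ** e = e" and "e \<noteq> 0"
  shows "M = UNIV"
proof -
  have sub: "msubspace M"
    using assms(1) by (simp add: mathieu_subspace_def)
  obtain i j where ij: "e$i$j \<noteq> 0"
    using assms(4) by (auto simp: vec_eq_iff)
  have "mat_unit k l \<in> M" for k l
  proof -
    have "msmult (e$i$j) (mat_unit k l) \<in> M"
      using mathieu_subspace_sandwich_idempotent[OF assms(1-3)] by (metis mat_unit_sandwich)
    then have "msmult (1 / e$i$j) (msmult (e$i$j) (mat_unit k l)) \<in> M"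
      using sub by (simp add: msubspace_def)
    moreover have "msmult (1 / e$i$j) (msmult (e$i$j) (mat_unit k l)) = mat_unit k l"
      using ij by (simp add: vec_eq_iff)
    ultimately show ?thesis
      by simp
  qed
  then show ?thesis
    using msubspace_eq_UNIV_if_mat_units[OF sub] by blast
qed

lemma mathieu_subspace_if_square_closed_eq_0:
  fixes M :: "('a::field^'n^'n) set"
  assumes "msubspace M" and "\<And>a. a \<in> M \<Longrightarrow> a ** a \<in> M \<Longrightarrow> a = 0"
  shows "mathieu_subspace M"
  unfolding mathieu_subspace_def
proof (intro conjI assms(1) allI impI)
  fix a b c :: "'a^'n^'n"
  assume "\<forall>m\<ge>1. matpow a m \<in> M"
  then have "a \<in> M" and "a ** a \<in> M"
    by (metis matpow_1 order_refl, metis matpow_2 one_le_numeral)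
  then have "a = 0"
    by (rule assms(2))
  moreover have "0 \<in> M"
    using assms(1) by (simp add: msubspace_def)
  ultimately show "\<exists>N. \<forall>m\<ge>N. b ** matpow a m ** c \<in> M"
    by (intro exI[of _ 1]) (simp add: matpow_zero)
qed

subsection \<open>The subspace K a + K b\<close>

lemma span2_matA_matB_iff:
  "X \<in> span2 (matA t) matB \<longleftrightarrow> X$1$2 = X$2$1 \<and> X$2$2 = t * X$1$1"
proof
  assume "X \<in> span2 (matA t) matB"
  then show "X$1$2 = X$2$1 \<and> X$2$2 = t * X$1$1"
    by (auto simp: span2_def)
next
  assume "X$1$2 = X$2$1 \<and> X$2$2 = t * X$1$1"
  then have "X = msmult (X$1$1) (matA t) + msmult (X$1$2) matB"
    by (simp add: mat2_eq_iff)
  then show "X \<in> span2 (matA t) matB"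
    by (auto simp: span2_def)
qed

lemma msubspace_span2_matA_matB: "msubspace (span2 (matA t) matB)"
  by (auto simp: msubspace_def span2_matA_matB_iff algebra_simps)

lemma span2_matA_matB_ne_UNIV: "span2 (matA t) matB \<noteq> UNIV"
proof
  assume "span2 (matA t) matB = UNIV"
  then have "mat_unit 1 2 \<in> span2 (matA t) matB"
    by simp
  then show False
    by (simp add: span2_matA_matB_iff mat_unit_def)
qed

lemma nonsquare_mult_square_eq_square_imp_0:
  fixes s :: "'a::field"
  assumes "\<forall>t. s \<noteq> t^2" and "s * x^2 = y^2"
  shows "x = 0 \<and> y = 0"
proof (cases "x = 0")
  case False
  then have "s = (y/x)^2"
    using assms(2) by (simp add: power_divide field_simps)
  then show ?thesis
    using assms(1) by blast
qed (use assms(2) in simp)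

lemma span2_matA_matB_square_closed_eq_0:
  fixes s :: "'a::field"
  assumes "s \<noteq> 1" and "\<forall>t. s \<noteq> t^2"
    and "a \<in> span2 (matA s) matB" and "a ** a \<in> span2 (matA s) matB"
  shows "a = 0"
proof -
  define x y where "x = a$1$1" and "y = a$1$2"
  have a21: "a$2$1 = y" and a22: "a$2$2 = s*x"
    using assms(3) by (auto simp: span2_matA_matB_iff x_def y_def)
  have "(a ** a)$2$2 = s * (a ** a)$1$1"
    using assms(4) by (simp add: span2_matA_matB_iff)
  then have "y*y + s*x*(s*x) = s * (x*x + y*y)"
    by (simp add: mat2_mult_nth a21 a22 flip: x_def y_def)
  then have "(s - 1) * (s * x^2 - y^2) = 0"
    by (simp add: algebra_simps power2_eq_square)
  then have "x = 0 \<and> y = 0"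
    using assms(1,2) nonsquare_mult_square_eq_square_imp_0 by simp
  then show ?thesis
    using a21 a22 by (simp add: mat2_eq_iff x_def y_def)
qed

lemma mathieu_subspace_span2_matA_matB:
  fixes s :: "'a::field"
  assumes "s \<noteq> 1" and "\<forall>t. s \<noteq> t^2"
  shows "mathieu_subspace (span2 (matA s) matB)"
  using msubspace_span2_matA_matB span2_matA_matB_square_closed_eq_0[OF assms]
  by (rule mathieu_subspace_if_square_closed_eq_0)

lemma span2_matA_matB_mnilpotent_eq_0:
  fixes s :: "'a::field"
  assumes "\<forall>t. s \<noteq> t^2" and "v \<in> span2 (matA s) matB" and "mnilpotent v"
  shows "v = 0"
proof -
  have "det v = 0"
    using assms(3) by (rule det_eq_0_if_mnilpotent)
  then have "s * (v$1$1)^2 = (v$1$2)^2"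
    using assms(2) by (simp add: det_2 span2_matA_matB_iff power2_eq_square algebra_simps)
  then show ?thesis
    using assms(2) nonsquare_mult_square_eq_square_imp_0[OF assms(1)]
    by (auto simp: mat2_eq_iff span2_matA_matB_iff)
qed

text \<open>(X_21 - X_12, X_22 - s X_11) are coordinates on M_2(K) / (K a + K b); a subspace
  containing K a + K b and some w outside it therefore contains the whole hyperplane on which
  these coordinates are proportional to those (d1, d2) of w.\<close>
lemma span2_matA_matB_insert_hyperplane:
  fixes s :: "'a::field"
  assumes "msubspace M" and "span2 (matA s) matB \<subseteq> M"
    and "w \<in> M" and "w \<notin> span2 (matA s) matB"
    and "d1 = w$2$1 - w$1$2" and "d2 = w$2$2 - s * w$1$1"
    and "(X$2$1 - X$1$2) * d2 = (X$2$2 - s * X$1$1) * d1"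
  shows "X \<in> M"
proof -
  have A: "matA s \<in> M" and B: "matB \<in> M"
    using assms(2) by (auto simp: span2_matA_matB_iff)
  have nz: "d1 \<noteq> 0 \<or> d2 \<noteq> 0"
    using assms(4-6) by (auto simp: span2_matA_matB_iff)
  define w0 where "w0 = w + msmult (- w$1$1) (matA s) + msmult (- w$1$2) matB"
  have w0M: "w0 \<in> M"
    unfolding w0_def using assms(1,3) A B unfolding msubspace_def by meson
  have w0_nth: "w0$1$1 = 0" "w0$1$2 = 0" "w0$2$1 = d1" "w0$2$2 = d2"
    by (simp_all add: w0_def assms(5,6))
  obtain c where "c * d1 = X$2$1 - X$1$2" and "c * d2 = X$2$2 - s * X$1$1"
  proof (cases "d1 = 0")
    case True
    then show ?thesis
      using nz that[of "(X$2$2 - s * X$1$1) / d2"] assms(7) by simp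
  next
    case False
    then show ?thesis
      using that[of "(X$2$1 - X$1$2) / d1"] assms(7) by (simp add: field_simps)
  qed
  then have "X = msmult (X$1$1) (matA s) + msmult (X$1$2) matB + msmult c w0"
    by (simp add: mat2_eq_iff w0_nth algebra_simps)
  moreover have "\<dots> \<in> M"
    using assms(1) A B w0M unfolding msubspace_def by meson
  ultimately show ?thesis
    by simp
qed

lemma exists_idempotent_in_hyperplane:
  fixes s :: "'a::field"
  assumes "s \<noteq> -1"
  obtains e :: "'a^2^2"
  where "e ** e = e" and "e \<noteq> 0" and "(e$2$1 - e$1$2) * d2 = (e$2$2 - s * e$1$1) * d1"
proof (cases "d2 = 0")
  case True
  have "1 + s \<noteq> 0"
    using assms by (metis add.commute add_eq_0_iff)
  then have "1/(1+s) + s/(1+s) = 1"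
    by (simp add: field_simps)
  then show ?thesis
    using that[of "mat2 (1/(1+s)) 1 (1/(1+s) * (s/(1+s))) (s/(1+s))"] \<open>1 + s \<noteq> 0\<close> True
    by (simp add: mat2_idempotent mat2_eq_iff)
next
  case False
  then show ?thesis
    using that[of "mat2 1 0 (-s*d1/d2) 0"] by (simp add: mat2_idempotent mat2_eq_iff)
qed

lemma span2_matA_matB_maximal:
  fixes s :: "'a::field"
  assumes "s \<noteq> -1" and "mathieu_subspace M" and "M \<noteq> UNIV" and "span2 (matA s) matB \<subseteq> M"
  shows "M = span2 (matA s) matB"
proof (rule ccontr)
  assume "M \<noteq> span2 (matA s) matB"
  then obtain w where w: "w \<in> M" "w \<notin> span2 (matA s) matB"
    using assms(4) by blast
  have sub: "msubspace M"
    using assms(2) by (simp add: mathieu_subspace_def)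
  obtain e :: "'a^2^2" where "e ** e = e" "e \<noteq> 0"
    and "(e$2$1 - e$1$2) * (w$2$2 - s * w$1$1) = (e$2$2 - s * e$1$1) * (w$2$1 - w$1$2)"
    using exists_idempotent_in_hyperplane[OF assms(1)] by blast
  moreover from this(3) have "e \<in> M"
    by (rule span2_matA_matB_insert_hyperplane[OF sub assms(4) w refl refl])
  ultimately have "M = UNIV"
    using mathieu_subspace_eq_UNIV_if_idempotent[OF assms(2)] by blast
  with assms(3) show False
    by simp
qed

text \<open>e1 X e2 squares to 0 because e2 e1 = 0, and it is nonzero for a suitable
  matrix unit X; so the corner form always contains a nonzero nilpotent.\<close>
lemma span2_matA_matB_ne_corner_form:
  fixes s :: "'a::field" and e1 e2 :: "'a^2^2"
  assumes "\<forall>t. s \<noteq> t^2" and "midempotent e2" and "e1 \<noteq> 0" and "e2 \<noteq> 0" and "e1 + e2 = mat 1"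
  shows "span2 (matA s) matB \<noteq> {msmult c (msmult l1 e1 + msmult l2 e2) + e1 ** X ** e2 | c X. True}"
proof
  assume eq: "span2 (matA s) matB = {msmult c (msmult l1 e1 + msmult l2 e2) + e1 ** X ** e2 | c X. True}"
  obtain i j where "e1$i$j \<noteq> 0"
    using assms(3) by (auto simp: vec_eq_iff)
  obtain k l where "e2$k$l \<noteq> 0"
    using assms(4) by (auto simp: vec_eq_iff)
  define Y where "Y = e1 ** mat_unit j k ** e2"
  have "Y \<noteq> 0"
    using \<open>e1$i$j \<noteq> 0\<close> \<open>e2$k$l \<noteq> 0\<close> by (auto simp: vec_eq_iff Y_def mult_mat_unit_mult_nth)
  have "msmult 0 (msmult l1 e1 + msmult l2 e2) + Y = Y"
    by (simp add: vec_eq_iff)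
  then have "Y \<in> span2 (matA s) matB"
    unfolding eq Y_def by (metis (mono_tags, lifting) mem_Collect_eq)
  have "e2 ** e2 + e2 ** e1 = e2"
    using assms(5) by (metis add.commute matrix_add_ldistrib matrix_mul_rid)
  then have "e2 ** e1 = 0"
    using assms(2) by (simp add: midempotent_def)
  have "Y ** Y = e1 ** mat_unit j k ** (e2 ** e1) ** mat_unit j k ** e2"
    by (simp add: Y_def matrix_mul_assoc)
  with \<open>e2 ** e1 = 0\<close> have "Y ** Y = 0"
    by simp
  then have "mnilpotent Y"
    unfolding mnilpotent_def by (metis matpow_2)
  then show False
    using span2_matA_matB_mnilpotent_eq_0[OF assms(1) \<open>Y \<in> _\<close>] \<open>Y \<noteq> 0\<close> by simp
qed

lemma idempotent_in_span2_matA_matB: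
  fixes r t :: "'a::field"
  assumes "r^2 = t" and "1 + t \<noteq> 0"
  defines "e \<equiv> msmult (1 / (1 + t)) (matA t + msmult r matB)"
  shows "e \<in> span2 (matA t) matB" and "e \<noteq> 0" and "midempotent e"
proof -
  define c where "c = 1 / (1 + t)"
  have e_nth: "e$1$1 = c" "e$1$2 = r*c" "e$2$1 = r*c" "e$2$2 = t*c"
    by (simp_all add: e_def c_def)
  show "e \<in> span2 (matA t) matB"
    by (simp add: span2_matA_matB_iff e_nth)
  show "e \<noteq> 0"
    using assms(2) by (simp add: mat2_eq_iff e_nth c_def)
  have "r * r = t" and "c * (1 + t) = 1"
    using assms by (simp_all add: c_def power2_eq_square)
  moreover have "c*c + r*c*(r*c) = c*c*(1+r*r)" "c*(r*c) + r*c*(t*c) = r*c*(c*(1+t))"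
    "r*c*c + t*c*(r*c) = r*c*(c*(1+t))" "r*c*(r*c) + t*c*(t*c) = t*c*(c*(1+r*r))"
    by (simp_all add: algebra_simps \<open>r * r = t\<close>)
  ultimately show "midempotent e"
    by (simp add: midempotent_def mat2_eq_iff mat2_mult_nth e_nth)
qed

lemma field_hom_0:
  "field_hom \<phi> \<Longrightarrow> \<phi> 0 = 0"
  unfolding field_hom_def by (metis add_cancel_left_right add_0)

lemma field_hom_eq_0_iff:
  fixes \<phi> :: "'a::field \<Rightarrow> 'b::field"
  assumes "field_hom \<phi>"
  shows "\<phi> x = 0 \<longleftrightarrow> x = 0"
proof
  assume "\<phi> x = 0"
  moreover have "\<phi> (x * inverse x) = \<phi> x * \<phi> (inverse x)" and "\<phi> 1 = 1"
    using assms by (simp_all add: field_hom_def)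
  ultimately show "x = 0"
    by (metis mult_zero_left right_inverse zero_neq_one)
qed (use field_hom_0[OF assms] in simp)

lemma mmap_matA: "field_hom \<phi> \<Longrightarrow> mmap \<phi> (matA s) = matA (\<phi> s)"
  by (simp add: mat2_eq_iff field_hom_0) (simp add: field_hom_def)

lemma mmap_matB: "field_hom \<phi> \<Longrightarrow> mmap \<phi> matB = matB"
  by (simp add: mat2_eq_iff field_hom_0) (simp add: field_hom_def)

theorem mainTheorem12:
  fixes s :: "'a::field"
  assumes "s \<noteq> 0" and "s \<noteq> 1" and "s \<noteq> -1" and "\<forall>t. s \<noteq> t^2"
  shows "maximal_mathieu_subspace (span2 (matA s) matB)
    \<and> (\<forall>v\<in>span2 (matA s) matB. mnilpotent v \<longrightarrow> v = 0)
    \<and> (\<forall>(e1::'a^2^2) e2 l1 l2. midempotent e1 \<and> midempotent e2 \<and> e1 \<noteq> 0 \<and> e2 \<noteq> 0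
          \<and> e1 + e2 = mat 1 \<longrightarrow>
          span2 (matA s) matB \<noteq> {msmult c (msmult l1 e1 + msmult l2 e2) + e1 ** X ** e2 | c X. True})
    \<and> \<not> (span2 (matA s) matB \<subseteq> {A. trace A = 0})
    \<and> (\<forall>(\<phi>::'a \<Rightarrow> 'b::field) r. field_hom \<phi> \<and> r^2 = \<phi> s \<longrightarrow>
          (let a' = mmap \<phi> (matA s); b' = mmap \<phi> matB;
               e = msmult (1 / (1 + \<phi> s)) (a' + msmult r b')
           in e \<in> span2 a' b' \<and> e \<noteq> 0 \<and> midempotent e
              \<and> \<not> mathieu_subspace (span2 a' b')))"
proof (intro conjI ballI allI impI)
  show "maximal_mathieu_subspace (span2 (matA s) matB)"
    unfolding maximal_mathieu_subspace_def
    using mathieu_subspace_span2_matA_matB[OF assms(2,4)] span2_matA_matB_ne_UNIV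
      span2_matA_matB_maximal[OF assms(3)] by blast
  show "v = 0" if "v \<in> span2 (matA s) matB" "mnilpotent v" for v
    using span2_matA_matB_mnilpotent_eq_0[OF assms(4) that] .
  show "span2 (matA s) matB \<noteq> {msmult c (msmult l1 e1 + msmult l2 e2) + e1 ** X ** e2 | c X. True}"
    if "midempotent e1 \<and> midempotent e2 \<and> e1 \<noteq> 0 \<and> e2 \<noteq> 0 \<and> e1 + e2 = mat 1"
    for e1 e2 :: "'a^2^2" and l1 l2
    using span2_matA_matB_ne_corner_form[OF assms(4)] that by blast
  have "trace (matA s) = 1 + s"
    by (simp add: trace_def sum_2)
  then show "\<not> span2 (matA s) matB \<subseteq> {A. trace A = 0}"
    using assms(3) span2_matA_matB_iff[of "matA s" s] by (auto simp: add_eq_0_iff)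
next
  fix \<phi> :: "'a \<Rightarrow> 'b::field" and r
  assume hom: "field_hom \<phi> \<and> r^2 = \<phi> s"
  have "1 + \<phi> s \<noteq> 0"
    using hom field_hom_eq_0_iff[of \<phi> "1 + s"] assms(3)
    by (auto simp: field_hom_def add_eq_0_iff)
  note e = idempotent_in_span2_matA_matB[of r "\<phi> s", OF conjunct2[OF hom] this]
  show "let a' = mmap \<phi> (matA s); b' = mmap \<phi> matB;
               e = msmult (1 / (1 + \<phi> s)) (a' + msmult r b')
           in e \<in> span2 a' b' \<and> e \<noteq> 0 \<and> midempotent e
              \<and> \<not> mathieu_subspace (span2 a' b')"
    using e mathieu_subspace_eq_UNIV_if_idempotent span2_matA_matB_ne_UNIV hom
    by (simp add: Let_def mmap_matA mmap_matB midempotent_def) blast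
qed

end
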